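(* Let $\varepsilon>0$, $\Omega\subset\mathbb{R}^2$ bounded open, $u\in\mathcal{SF}_\varepsilon(\Omega)$ and $R\in\mathcal{R}_\varepsilon(u)$. Then the set $$\{u(i): i\in\mathcal{L}_\varepsilon,\ i\in\Gamma\text{ for some }\Gamma\in\mathcal{N}_\varepsilon(u)\text{ with }\Gamma\subset R\}$$ is either empty or consists of exactly two antipodal points of $\mathbb{S}^2$.
   Context: $\mathcal{L}=\{ae_1+b\hat e_2:a,b\in\mathbb{Z}\}$ with $e_1=(1,0)$, $\hat e_2=\frac12(1,\sqrt3)$, $\mathcal{L}_\varepsilon=\varepsilon\mathcal{L}$; $\mathcal{T}_\varepsilon$ is the set of closed triangles with vertices in $\mathcal{L}_\varepsilon$ pairwise at distance $\varepsilon$; $\mathcal{E}_\varepsilon$ the set of segments $[i,j]$, $i,j\in\mathcal{L}_\varepsilon$, $|i-j|=\varepsilon$. $n=(0,0,1)$; $\mathcal{SF}_\varepsilon(\Omega)$ is the set of $u:\mathcal{L}_\varepsilon\to\mathbb{S}^2$ with $u=n$ on $\mathcal{L}_\varepsilon\setminus\Omega$. $\mathcal{N}_\varepsilon(u)=\{[i,j]\in\mathcal{E}_\varepsilon:u(i)=-u(j)\}$. Two triangles of $\mathcal{T}_\varepsilon$ are neighbours if their intersection is an edge in $\mathcal{N}_\varepsilon(u)$, and connected if joined by a finite chain of consecutive neighbours. $\mathcal{R}_\varepsilon(u)$ is the set of admissible interpolation regions: unions of pairwise connected triangles of $\mathcal{T}_\varepsilon$ that are maximal with respect to inclusion. *)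

theory Defs
  imports "HOL-Analysis.Analysis"
begin

type_synonym pt = "real \<times> real"
type_synonym spin = "real \<times> real \<times> real"

definition e1 :: pt where "e1 = (1, 0)"
definition e2hat :: pt where "e2hat = (1/2, sqrt 3 / 2)"

definition lattice :: "real \<Rightarrow> pt set" where
  "lattice eps = {eps *\<^sub>R (of_int a *\<^sub>R e1 + of_int b *\<^sub>R e2hat) | a b :: int. True}"

definition sphere2 :: "spin set" where "sphere2 = {v. norm v = 1}"

definition nvec :: spin where "nvec = (0, 0, 1)"

definition triangles :: "real \<Rightarrow> pt set set" where
  "triangles eps = {convex hull {i, j, k} | i j k.
      i \<in> lattice eps \<and> j \<in> lattice eps \<and> k \<in> lattice eps \<and>
      dist i j = eps \<and> dist j k = eps \<and> dist i k = eps}"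

definition edges :: "real \<Rightarrow> pt set set" where
  "edges eps = {closed_segment i j | i j.
      i \<in> lattice eps \<and> j \<in> lattice eps \<and> dist i j = eps}"

definition SF :: "real \<Rightarrow> pt set \<Rightarrow> (pt \<Rightarrow> spin) set" where
  "SF eps \<Omega> = {u. (\<forall>i\<in>lattice eps. u i \<in> sphere2) \<and>
                    (\<forall>i\<in>lattice eps - \<Omega>. u i = nvec)}"

definition frustrated :: "real \<Rightarrow> (pt \<Rightarrow> spin) \<Rightarrow> pt set set" where
  "frustrated eps u = {closed_segment i j | i j.
      i \<in> lattice eps \<and> j \<in> lattice eps \<and> dist i j = eps \<and> u i = - u j}"

definition neighbours :: "real \<Rightarrow> (pt \<Rightarrow> spin) \<Rightarrow> pt set \<Rightarrow> pt set \<Rightarrow> bool" where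
  "neighbours eps u T1 T2 \<longleftrightarrow> T1 \<in> triangles eps \<and> T2 \<in> triangles eps \<and>
      T1 \<inter> T2 \<in> frustrated eps u"

definition tri_connected :: "real \<Rightarrow> (pt \<Rightarrow> spin) \<Rightarrow> pt set \<Rightarrow> pt set \<Rightarrow> bool" where
  "tri_connected eps u T1 T2 \<longleftrightarrow> T1 \<in> triangles eps \<and> T2 \<in> triangles eps \<and>
      (neighbours eps u)\<^sup>*\<^sup>* T1 T2"

definition connected_unions :: "real \<Rightarrow> (pt \<Rightarrow> spin) \<Rightarrow> pt set set" where
  "connected_unions eps u = {\<Union>C | C. C \<noteq> {} \<and> C \<subseteq> triangles eps \<and>
      (\<forall>T1\<in>C. \<forall>T2\<in>C. tri_connected eps u T1 T2)}"

definition regions :: "real \<Rightarrow> (pt \<Rightarrow> spin) \<Rightarrow> pt set set" where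
  "regions eps u = {R \<in> connected_unions eps u.
      \<forall>R' \<in> connected_unions eps u. R \<subseteq> R' \<longrightarrow> R' = R}"

end

(*
  Write lattice points in coordinates with respect to the basis eps e1, eps e2hat. The squared
  distance of two lattice points is then eps^2 (a^2 + a b + b^2) for their coordinate difference
  (a, b), and a small integer computation shows that the only lattice points within distance eps
  of the midpoint of a lattice edge are its two endpoints and the two apexes of the adjacent
  triangles, which are sqrt 3 eps apart. Hence the only lattice points on an edge are its
  endpoints, and an edge whose midpoint lies in a triangle of T_eps is a side of that triangle.

  As any two sides of a triangle share a vertex, the spins at the endpoints of the frustrated
  edges in one triangle form a set {p, -p}, or there are none. Neighbouring triangles share a
  frustrated edge and therefore carry the same set; along chains of neighbours this set is the
  same for all triangles of the region R, and it is the set in question.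
*)
theory Submission
  imports Defs
begin

definition lattice_point :: "real \<Rightarrow> real \<Rightarrow> real \<Rightarrow> pt" where
  "lattice_point eps x y = eps *\<^sub>R (x *\<^sub>R e1 + y *\<^sub>R e2hat)"

definition eisenstein_norm :: "'a::comm_ring_1 \<Rightarrow> 'a \<Rightarrow> 'a" where
  "eisenstein_norm a b = a * a + a * b + b * b"

lemma eisenstein_norm_commute: "eisenstein_norm a b = eisenstein_norm b a"
  by (simp add: eisenstein_norm_def algebra_simps)

lemma eisenstein_norm_diff_commute:
  "eisenstein_norm (a - b) (c - d) = eisenstein_norm (b - a) (d - c)"
  by (simp add: eisenstein_norm_def algebra_simps)

lemma eisenstein_norm_lower_bound:
  fixes a b :: "'a::linordered_idom"
  shows "3 * a\<^sup>2 \<le> 4 * eisenstein_norm a b"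
proof -
  have "4 * eisenstein_norm a b = (a + 2 * b)\<^sup>2 + 3 * a\<^sup>2"
    by (simp add: eisenstein_norm_def power2_eq_square algebra_simps)
  then show ?thesis by simp
qed

lemma eisenstein_norm_nonneg:
  fixes a b :: "'a::linordered_idom"
  shows "0 \<le> eisenstein_norm a b"
proof -
  have "0 \<le> 4 * eisenstein_norm a b"
    by (rule order_trans[OF _ eisenstein_norm_lower_bound]) simp
  then show ?thesis by (simp add: zero_le_mult_iff)
qed

lemma mem_lattice_iff: "p \<in> lattice eps \<longleftrightarrow> (\<exists>a b. p = lattice_point eps (of_int a) (of_int b))"
  by (auto simp: lattice_def lattice_point_def)

lemma lattice_point_coords:
  "lattice_point eps x y = (eps * (x + y / 2), eps * y * sqrt 3 / 2)"
  by (simp add: lattice_point_def e1_def e2hat_def algebra_simps)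

lemma dist_lattice_point:
  "dist (lattice_point eps x y) (lattice_point eps x' y')
    = \<bar>eps\<bar> * sqrt (eisenstein_norm (x - x') (y - y'))"
proof -
  have sqrt3: "eps * y * sqrt 3 / 2 - eps * y' * sqrt 3 / 2 = eps * (y - y') / 2 * sqrt 3"
    by (simp add: algebra_simps)
  have "(dist (lattice_point eps x y) (lattice_point eps x' y'))\<^sup>2
      = (eps * (x + y / 2) - eps * (x' + y' / 2))\<^sup>2 + 3 * (eps * (y - y') / 2)\<^sup>2"
    unfolding lattice_point_coords dist_Pair_Pair dist_real_def sqrt3
    by (simp add: power_mult_distrib power_divide power2_abs)
  also have "\<dots> = eps\<^sup>2 * eisenstein_norm (x - x') (y - y')"
    by (simp add: eisenstein_norm_def power2_eq_square field_simps)
  also have "\<dots> = (\<bar>eps\<bar> * sqrt (eisenstein_norm (x - x') (y - y')))\<^sup>2"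
    by (simp add: eisenstein_norm_nonneg power_mult_distrib)
  finally show ?thesis
    by (simp add: eisenstein_norm_nonneg power2_eq_iff_nonneg)
qed

lemma midpoint_lattice_point:
  "midpoint (lattice_point eps x y) (lattice_point eps x' y')
    = lattice_point eps ((x + x') / 2) ((y + y') / 2)"
  by (simp add: midpoint_def lattice_point_def algebra_simps add_divide_distrib)

lemma dist_lattice_point_eq_iff:
  assumes "eps > 0"
  shows "dist (lattice_point eps x y) (lattice_point eps x' y') = eps
    \<longleftrightarrow> eisenstein_norm (x - x') (y - y') = 1"
  using assms by (simp add: dist_lattice_point)

lemma dist_lattice_point_le_iff:
  assumes "eps > 0" and "r \<ge> 0"
  shows "dist (lattice_point eps x y) (lattice_point eps x' y') \<le> eps * r
    \<longleftrightarrow> eisenstein_norm (x - x') (y - y') \<le> r\<^sup>2"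
  using assms by (auto simp: dist_lattice_point intro: real_le_lsqrt sqrt_le_D)

lemma dist_lattice_point_int_eq_iff:
  fixes a1 a2 b1 b2 :: int
  assumes "eps > 0"
  shows "dist (lattice_point eps a1 a2) (lattice_point eps b1 b2) = eps
    \<longleftrightarrow> eisenstein_norm (b1 - a1) (b2 - a2) = 1"
proof -
  have "eisenstein_norm (real_of_int a1 - b1) (real_of_int a2 - b2)
      = of_int (eisenstein_norm (b1 - a1) (b2 - a2))"
    by (simp add: eisenstein_norm_def algebra_simps)
  then show ?thesis
    by (simp only: dist_lattice_point_eq_iff[OF assms] of_int_eq_1_iff)
qed

lemma dist_edge_midpoint_lattice_point_le_iff:
  fixes i1 i2 j1 j2 a1 a2 :: int and r :: real
  assumes "eps > 0" and "r \<ge> 0"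
  shows "dist (midpoint (lattice_point eps i1 i2) (lattice_point eps j1 j2)) (lattice_point eps a1 a2) \<le> eps * r
    \<longleftrightarrow> eisenstein_norm (2 * (a1 - i1) - (j1 - i1)) (2 * (a2 - i2) - (j2 - i2)) \<le> (2 * r)\<^sup>2"
proof -
  have half: "eisenstein_norm ((real_of_int i1 + j1) / 2 - a1) ((real_of_int i2 + j2) / 2 - a2)
      = of_int (eisenstein_norm (2 * (a1 - i1) - (j1 - i1)) (2 * (a2 - i2) - (j2 - i2))) / 4"
    by (simp add: eisenstein_norm_def field_simps)
  show ?thesis
    unfolding midpoint_lattice_point dist_lattice_point_le_iff[OF assms] half
    by (simp add: power_mult_distrib mult_ac)
qed

lemma abs_le_of_eisenstein_norm_le:
  fixes a b k n :: int
  assumes "eisenstein_norm a b \<le> n" and "4 * n < 3 * (k + 1)\<^sup>2" and "k \<ge> 0"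
  shows "\<bar>a\<bar> \<le> k" and "\<bar>b\<bar> \<le> k"
proof -
  have "a\<^sup>2 < (k + 1)\<^sup>2" "b\<^sup>2 < (k + 1)\<^sup>2"
    using eisenstein_norm_lower_bound[of a b] eisenstein_norm_lower_bound[of b a] assms(1,2)
    by (simp_all add: eisenstein_norm_commute)
  then show "\<bar>a\<bar> \<le> k" "\<bar>b\<bar> \<le> k"
    using abs_le_square_iff[of "k + 1"] assms(3) by (smt (verit))+
qed

lemma eisenstein_norm_eq_1_iff:
  fixes d1 d2 :: int
  shows "eisenstein_norm d1 d2 = 1 \<longleftrightarrow> (d1, d2) \<in> {(1, 0), (0, 1), (-1, 1), (-1, 0), (0, -1), (1, -1)}"
proof
  assume "eisenstein_norm d1 d2 = 1"
  then have "d1 \<in> {-1, 0, 1}" "d2 \<in> {-1, 0, 1}"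
    using abs_le_of_eisenstein_norm_le[of d1 d2 1 1] by auto
  with \<open>eisenstein_norm d1 d2 = 1\<close> show "(d1, d2) \<in> {(1, 0), (0, 1), (-1, 1), (-1, 0), (0, -1), (1, -1)}"
    by (auto simp: eisenstein_norm_def)
qed (auto simp: eisenstein_norm_def)

\<comment> \<open>Coordinates relative to one endpoint of an edge whose other endpoint is d: the point x
  lies within distance r eps of the midpoint iff the Eisenstein norm of 2 x - d is at most 4 r^2.\<close>
lemma near_edge_midpoint_coords:
  fixes d1 d2 x1 x2 :: int
  assumes d: "eisenstein_norm d1 d2 = 1" and x: "eisenstein_norm (2 * x1 - d1) (2 * x2 - d2) \<le> 4"
  shows "(x1, x2) \<in> {(0, 0), (d1, d2), (- d2, d1 + d2), (d1 + d2, - d1)}"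
proof -
  have "\<bar>2 * x1 - d1\<bar> \<le> 2" "\<bar>2 * x2 - d2\<bar> \<le> 2"
    using abs_le_of_eisenstein_norm_le[OF x, of 2] by simp_all
  moreover have unit: "(d1, d2) \<in> {(1, 0), (0, 1), (-1, 1), (-1, 0), (0, -1), (1, -1)}"
    using d eisenstein_norm_eq_1_iff by blast
  ultimately have "x1 \<in> {-1, 0, 1}" "x2 \<in> {-1, 0, 1}"
    by auto
  with unit x show ?thesis
    unfolding eisenstein_norm_def by (elim insertE emptyE; simp)
qed

lemma on_edge_coords:
  fixes d1 d2 x1 x2 :: int
  assumes d: "eisenstein_norm d1 d2 = 1" and x: "eisenstein_norm (2 * x1 - d1) (2 * x2 - d2) \<le> 1"
  shows "(x1, x2) \<in> {(0, 0), (d1, d2)}"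
proof -
  have "(x1, x2) \<in> {(0, 0), (d1, d2), (- d2, d1 + d2), (d1 + d2, - d1)}"
    using near_edge_midpoint_coords[OF d] x by simp
  moreover have "eisenstein_norm (2 * (- d2) - d1) (2 * (d1 + d2) - d2) = 3"
    "eisenstein_norm (2 * (d1 + d2) - d1) (2 * (- d1) - d2) = 3"
    using d by (simp_all add: eisenstein_norm_def algebra_simps)
  ultimately show ?thesis
    using x by auto
qed

lemma distinct_triple_in_four:
  assumes "x \<in> {a, b, r, s}" "y \<in> {a, b, r, s}" "z \<in> {a, b, r, s}"
    and "x \<noteq> y" "y \<noteq> z" "x \<noteq> z" and "\<not> {r, s} \<subseteq> {x, y, z}"
  shows "a \<in> {x, y, z} \<and> b \<in> {x, y, z}"
  using assms by blast

lemma triangle_at_edge_midpoint_coords: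
  fixes d1 d2 x1 x2 y1 y2 z1 z2 :: int
  assumes d: "eisenstein_norm d1 d2 = 1"
    and near: "eisenstein_norm (2 * x1 - d1) (2 * x2 - d2) \<le> 4"
      "eisenstein_norm (2 * y1 - d1) (2 * y2 - d2) \<le> 4"
      "eisenstein_norm (2 * z1 - d1) (2 * z2 - d2) \<le> 4"
    and sides: "eisenstein_norm (x1 - y1) (x2 - y2) = 1"
      "eisenstein_norm (y1 - z1) (y2 - z2) = 1"
      "eisenstein_norm (x1 - z1) (x2 - z2) = 1"
  shows "(0, 0) \<in> {(x1, x2), (y1, y2), (z1, z2)} \<and> (d1, d2) \<in> {(x1, x2), (y1, y2), (z1, z2)}"
proof -
  \<comment> \<open>The two apexes over the edge are at distance sqrt 3 eps, so no triangle contains both.\<close>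
  define apexes where "apexes = {(- d2, d1 + d2), (d1 + d2, - d1)}"
  have "eisenstein_norm (- d2 - (d1 + d2)) (d1 + d2 - - d1) = 3"
    "eisenstein_norm (d1 + d2 - - d2) (- d1 - (d1 + d2)) = 3"
    using d by (simp_all add: eisenstein_norm_def algebra_simps)
  then have "\<not> apexes \<subseteq> {(x1, x2), (y1, y2), (z1, z2)}"
    using sides d unfolding apexes_def by auto
  moreover have "(x1, x2) \<noteq> (y1, y2)" "(y1, y2) \<noteq> (z1, z2)" "(x1, x2) \<noteq> (z1, z2)"
    using sides by (auto simp: eisenstein_norm_def)
  moreover note near_edge_midpoint_coords[OF d near(1)] near_edge_midpoint_coords[OF d near(2)]
    near_edge_midpoint_coords[OF d near(3)]
  ultimately show ?thesis
    unfolding apexes_def by (intro distinct_triple_in_four)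
qed

lemma lattice_point_on_edge:
  assumes "eps > 0" and "i \<in> lattice eps" "j \<in> lattice eps" "dist i j = eps"
    and "k \<in> lattice eps" "k \<in> closed_segment i j"
  shows "k = i \<or> k = j"
proof -
  obtain i1 i2 j1 j2 k1 k2 :: int where coords: "i = lattice_point eps i1 i2"
    "j = lattice_point eps j1 j2" "k = lattice_point eps k1 k2"
    using assms(2,3,5) unfolding mem_lattice_iff by metis
  have "closed_segment i j \<subseteq> cball (midpoint i j) (eps / 2)"
    using assms(4) by (intro closed_segment_subset) (auto simp: dist_midpoint)
  with assms(6) have "dist (midpoint i j) k \<le> eps * (1 / 2)"
    by auto
  then have "eisenstein_norm (2 * (k1 - i1) - (j1 - i1)) (2 * (k2 - i2) - (j2 - i2)) \<le> 1"
    using dist_edge_midpoint_lattice_point_le_iff[OF assms(1), of "1 / 2"] by (simp add: coords)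
  moreover have "eisenstein_norm (j1 - i1) (j2 - i2) = 1"
    using assms(4) dist_lattice_point_int_eq_iff[OF assms(1)] by (simp add: coords)
  ultimately have "(k1 - i1, k2 - i2) \<in> {(0, 0), (j1 - i1, j2 - i2)}"
    using on_edge_coords by blast
  then show ?thesis
    by (auto simp: coords)
qed

lemma midpoint_in_triangle_imp_vertices:
  assumes "eps > 0" and "i \<in> lattice eps" "j \<in> lattice eps" "dist i j = eps"
    and "a \<in> lattice eps" "b \<in> lattice eps" "c \<in> lattice eps"
    and "dist a b = eps" "dist b c = eps" "dist a c = eps"
    and "midpoint i j \<in> convex hull {a, b, c}"
  shows "i \<in> {a, b, c} \<and> j \<in> {a, b, c}"
proof -
  obtain i1 i2 j1 j2 a1 a2 b1 b2 c1 c2 :: int where coords: "i = lattice_point eps i1 i2"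
    "j = lattice_point eps j1 j2" "a = lattice_point eps a1 a2" "b = lattice_point eps b1 b2"
    "c = lattice_point eps c1 c2"
    using assms(2,3,5-7) unfolding mem_lattice_iff by metis
  have near: "dist (midpoint i j) v \<le> eps * 1" if "v \<in> {a, b, c}" for v
  proof -
    have "convex hull {a, b, c} \<subseteq> cball v eps"
      using that assms(1,8-10) by (intro hull_minimal) (auto simp: dist_commute)
    with assms(11) show ?thesis
      by (auto simp: dist_commute)
  qed
  have "eisenstein_norm (2 * (v1 - i1) - (j1 - i1)) (2 * (v2 - i2) - (j2 - i2)) \<le> 4"
    if "lattice_point eps v1 v2 \<in> {a, b, c}" for v1 v2 :: int
    using near[OF that] dist_edge_midpoint_lattice_point_le_iff[OF assms(1), of 1] by (simp add: coords)
  moreover have "eisenstein_norm (j1 - i1) (j2 - i2) = 1" "eisenstein_norm (a1 - b1) (a2 - b2) = 1"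
    "eisenstein_norm (b1 - c1) (b2 - c2) = 1" "eisenstein_norm (a1 - c1) (a2 - c2) = 1"
    using assms(4,8-10) dist_lattice_point_int_eq_iff[OF assms(1)]
    by (simp_all add: coords eisenstein_norm_diff_commute)
  ultimately have "(0, 0) \<in> {(a1 - i1, a2 - i2), (b1 - i1, b2 - i2), (c1 - i1, c2 - i2)}
    \<and> (j1 - i1, j2 - i2) \<in> {(a1 - i1, a2 - i2), (b1 - i1, b2 - i2), (c1 - i1, c2 - i2)}"
    by (intro triangle_at_edge_midpoint_coords) (simp_all add: coords)
  then show ?thesis
    by (auto simp: coords)
qed

lemma lattice_edge_subset_triangle:
  assumes "eps > 0" and "T \<in> triangles eps"
    and "i \<in> lattice eps" "j \<in> lattice eps" "dist i j = eps" "midpoint i j \<in> T"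
  shows "closed_segment i j \<subseteq> T"
proof -
  obtain a b c where "T = convex hull {a, b, c}" "a \<in> lattice eps" "b \<in> lattice eps" "c \<in> lattice eps"
    "dist a b = eps" "dist b c = eps" "dist a c = eps"
    using assms(2) unfolding triangles_def by blast
  with midpoint_in_triangle_imp_vertices[OF assms(1,3-5)] assms(6) show ?thesis
    by (simp add: closed_segment_subset convex_convex_hull hull_inc)
qed

lemma frustrated_edge_endpointE:
  assumes "eps > 0" and "\<Gamma> \<in> frustrated eps u" "k \<in> \<Gamma>" "k \<in> lattice eps"
  obtains j where "\<Gamma> = closed_segment k j" "j \<in> lattice eps" "dist k j = eps" "u k = - u j"
proof -
  obtain i j where ij: "\<Gamma> = closed_segment i j" "i \<in> lattice eps" "j \<in> lattice eps"
    "dist i j = eps" "u i = - u j"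
    using assms(2) unfolding frustrated_def by blast
  then have "k = i \<or> k = j"
    using lattice_point_on_edge[OF assms(1)] assms(3,4) by blast
  then show ?thesis
    using that ij by (metis closed_segment_commute dist_commute minus_equation_iff)
qed

definition frustrated_spins :: "real \<Rightarrow> (pt \<Rightarrow> spin) \<Rightarrow> pt set \<Rightarrow> spin set" where
  "frustrated_spins eps u S = {u i | i. i \<in> lattice eps \<and> (\<exists>\<Gamma>\<in>frustrated eps u. i \<in> \<Gamma> \<and> \<Gamma> \<subseteq> S)}"

lemma frustrated_spins_mono: "S \<subseteq> S' \<Longrightarrow> frustrated_spins eps u S \<subseteq> frustrated_spins eps u S'"
  unfolding frustrated_spins_def by blast

lemma frustrated_edges_in_triangle:
  fixes u :: "pt \<Rightarrow> 'a::group_add"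
  assumes "eps > 0" and "T \<in> triangles eps"
    and "k \<in> lattice eps" "j \<in> lattice eps" "dist k j = eps" "u k = - u j" "closed_segment k j \<subseteq> T"
    and "k' \<in> lattice eps" "j' \<in> lattice eps" "dist k' j' = eps" "u k' = - u j'" "closed_segment k' j' \<subseteq> T"
  shows "u k' \<in> {u k, - u k}"
proof -
  obtain a b c where abc: "T = convex hull {a, b, c}" "a \<in> lattice eps" "b \<in> lattice eps"
    "c \<in> lattice eps" "dist a b = eps" "dist b c = eps" "dist a c = eps"
    using assms(2) unfolding triangles_def by blast
  have vertices: "i \<in> {a, b, c} \<and> i' \<in> {a, b, c}"
    if "i \<in> lattice eps" "i' \<in> lattice eps" "dist i i' = eps" "closed_segment i i' \<subseteq> T" for i i'
    using midpoint_in_triangle_imp_vertices[OF assms(1) that(1-3) abc(2-7)] that(4) abc(1)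
    by (metis midpoint_in_closed_segment subsetD)
  have "k \<noteq> j" "k' \<noteq> j'"
    using assms(1,5,10) by auto
  moreover have "k \<in> {a, b, c}" "j \<in> {a, b, c}" "k' \<in> {a, b, c}" "j' \<in> {a, b, c}"
    using vertices assms(3-5,7-10,12) by blast+
  ultimately have "k' \<in> {k, j} \<or> j' \<in> {k, j}"
    by auto
  moreover have "u j = - u k"
    by (simp add: assms(6))
  ultimately show ?thesis
    using assms(11) by auto
qed

lemma frustrated_spins_triangle:
  assumes "eps > 0" and "T \<in> triangles eps"
    and "k \<in> lattice eps" "\<Gamma> \<in> frustrated eps u" "k \<in> \<Gamma>" "\<Gamma> \<subseteq> T"
  shows "frustrated_spins eps u T = {u k, - u k}"
proof
  obtain j where j: "\<Gamma> = closed_segment k j" "j \<in> lattice eps" "dist k j = eps" "u k = - u j"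
    using frustrated_edge_endpointE[OF assms(1,4,5,3)] .
  show "frustrated_spins eps u T \<subseteq> {u k, - u k}"
  proof
    fix s assume "s \<in> frustrated_spins eps u T"
    then obtain k' \<Gamma>' where k': "s = u k'" "k' \<in> lattice eps" "\<Gamma>' \<in> frustrated eps u"
      "k' \<in> \<Gamma>'" "\<Gamma>' \<subseteq> T"
      unfolding frustrated_spins_def by blast
    then obtain j' where "\<Gamma>' = closed_segment k' j'" "j' \<in> lattice eps" "dist k' j' = eps" "u k' = - u j'"
      using frustrated_edge_endpointE[OF assms(1)] by metis
    with frustrated_edges_in_triangle[OF assms(1-3) j(2-4)] assms(6) j(1) k' show "s \<in> {u k, - u k}"
      by blast
  qed
  have "u k \<in> frustrated_spins eps u T" "u j \<in> frustrated_spins eps u T"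
    using assms(3,4,6) j(1,2) unfolding frustrated_spins_def by blast+
  moreover have "u j = - u k"
    using j(4) by simp
  ultimately show "{u k, - u k} \<subseteq> frustrated_spins eps u T"
    by simp
qed

lemma frustrated_spins_neighbours:
  assumes "eps > 0" and "neighbours eps u T1 T2"
  shows "frustrated_spins eps u T1 = frustrated_spins eps u T2"
proof -
  obtain i j where "T1 \<inter> T2 = closed_segment i j" "i \<in> lattice eps"
    and shared: "T1 \<inter> T2 \<in> frustrated eps u"
    using assms(2) unfolding neighbours_def frustrated_def by blast
  then have "i \<in> T1 \<inter> T2"
    by simp
  with shared assms show ?thesis
    unfolding neighbours_def
    using frustrated_spins_triangle[OF assms(1) _ \<open>i \<in> lattice eps\<close> shared] by blast
qed

lemma frustrated_spins_tri_connected: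
  assumes "eps > 0" and "tri_connected eps u T1 T2"
  shows "frustrated_spins eps u T1 = frustrated_spins eps u T2"
proof -
  have "(neighbours eps u)\<^sup>*\<^sup>* T1 T2"
    using assms(2) unfolding tri_connected_def by blast
  then show ?thesis
    by (induction rule: rtranclp_induct) (simp_all add: frustrated_spins_neighbours[OF assms(1)])
qed

lemma frustrated_spins_Union:
  assumes "eps > 0" and "C \<subseteq> triangles eps"
  shows "frustrated_spins eps u (\<Union>C) = (\<Union>T\<in>C. frustrated_spins eps u T)"
proof
  show "frustrated_spins eps u (\<Union>C) \<subseteq> (\<Union>T\<in>C. frustrated_spins eps u T)"
  proof
    fix s assume "s \<in> frustrated_spins eps u (\<Union>C)"
    then obtain k \<Gamma> where k: "s = u k" "k \<in> lattice eps" "\<Gamma> \<in> frustrated eps u"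
      "k \<in> \<Gamma>" "\<Gamma> \<subseteq> \<Union>C"
      unfolding frustrated_spins_def by blast
    then obtain j where j: "\<Gamma> = closed_segment k j" "j \<in> lattice eps" "dist k j = eps"
      using frustrated_edge_endpointE[OF assms(1)] by metis
    then obtain T where "T \<in> C" "midpoint k j \<in> T"
      using k(5) midpoint_in_closed_segment by blast
    then have "\<Gamma> \<subseteq> T"
      using lattice_edge_subset_triangle[OF assms(1)] assms(2) k(2) j by blast
    with k \<open>T \<in> C\<close> show "s \<in> (\<Union>T\<in>C. frustrated_spins eps u T)"
      unfolding frustrated_spins_def by blast
  qed
  show "(\<Union>T\<in>C. frustrated_spins eps u T) \<subseteq> frustrated_spins eps u (\<Union>C)"
    by (intro UN_least frustrated_spins_mono) blast
qed

theorem lemma5p2: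
  fixes eps :: real and \<Omega> :: "pt set" and u :: "pt \<Rightarrow> spin" and R :: "pt set"
  assumes "eps > 0" and "bounded \<Omega>" and "open \<Omega>"
    and "u \<in> SF eps \<Omega>" and "R \<in> regions eps u"
  shows "{u i | i. i \<in> lattice eps \<and> (\<exists>\<Gamma>\<in>frustrated eps u. i \<in> \<Gamma> \<and> \<Gamma> \<subseteq> R)} = {}
       \<or> (\<exists>p\<in>sphere2. {u i | i. i \<in> lattice eps \<and> (\<exists>\<Gamma>\<in>frustrated eps u. i \<in> \<Gamma> \<and> \<Gamma> \<subseteq> R)} = {p, - p})"
proof -
  \<comment> \<open>Of the hypotheses on \<Omega> and u only the values of u in sphere2 are used.\<close>
  obtain C where C: "R = \<Union>C" "C \<noteq> {}" "C \<subseteq> triangles eps"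
    and connected: "\<forall>T1\<in>C. \<forall>T2\<in>C. tri_connected eps u T1 T2"
    using assms(5) unfolding regions_def connected_unions_def by blast
  then obtain T0 where "T0 \<in> C"
    by blast
  have "frustrated_spins eps u T = frustrated_spins eps u T0" if "T \<in> C" for T
    using frustrated_spins_tri_connected[OF assms(1)] connected that \<open>T0 \<in> C\<close> by blast
  then have "frustrated_spins eps u R = frustrated_spins eps u T0"
    using frustrated_spins_Union[OF assms(1) C(3)] C(1,2) by (simp add: SUP_eq_const)
  moreover have "frustrated_spins eps u T0 = {} \<or> (\<exists>p\<in>sphere2. frustrated_spins eps u T0 = {p, - p})"
  proof (cases "frustrated_spins eps u T0 = {}")
    case False
    then obtain k \<Gamma> where "k \<in> lattice eps" "\<Gamma> \<in> frustrated eps u" "k \<in> \<Gamma>" "\<Gamma> \<subseteq> T0"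
      unfolding frustrated_spins_def by blast
    moreover have "u k \<in> sphere2"
      using assms(4) \<open>k \<in> lattice eps\<close> unfolding SF_def by blast
    ultimately show ?thesis
      using frustrated_spins_triangle[OF assms(1)] C(3) \<open>T0 \<in> C\<close> by blast
  qed simp
  ultimately show ?thesis
    unfolding frustrated_spins_def by simp
qed

end
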